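(* Let $q$ be a prime power, $n\ge 0$, and $L_q^n$ the lattice of all subspaces of $\mathbb{F}_q^n$ ordered by inclusion and ranked by dimension. Then $$\mathcal{M}(L_q^n,t)=\sum_{0\le i\le j\le k\le n}(-1)^{k-i}\begin{bmatrix}n\\ i,\,j-i,\,k-j,\,n-k\end{bmatrix}_q q^{\binom{j-i}{2}+\binom{k-j}{2}}\,t^{3n-i-j-k}.$$
   Context: $\begin{bmatrix}n\\k\end{bmatrix}_q=\dfrac{(q^n-1)\cdots(q-1)}{(q^k-1)\cdots(q-1)\cdot(q^{n-k}-1)\cdots(q-1)}$ and $\begin{bmatrix}n\\k_1,\dots,k_m\end{bmatrix}_q=\begin{bmatrix}n\\k_1\end{bmatrix}_q\begin{bmatrix}n-k_1\\k_2\end{bmatrix}_q\cdots\begin{bmatrix}n-(k_1+\cdots+k_{m-1})\\k_m\end{bmatrix}_q$. For a finite ranked poset $\mathcal{P}$, $\rho(x,y,z)=3\,\mathrm{rk}(\mathcal{P})-\mathrm{rk}(x)-\mathrm{rk}(y)-\mathrm{rk}(z)$, $\delta_3(x,y,z)=1$ if $x=y=z$ and $0$ otherwise, $J$ is the unique integer-valued function on triples $x\le y\le z$ with $\sum_{x\le a\le y\le b\le z}J(a,y,b)=\delta_3(x,y,z)$ for all $x\le y\le z$, and $\mathcal{M}(\mathcal{P},t)=\sum_{x\le y\le z}J(x,y,z)\,t^{\rho(x,y,z)}$. *)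

theory Defs
  imports "HOL-Computational_Algebra.Polynomial" "HOL-Library.Function_Algebras"
begin

definition poset_rank :: "'b set \<Rightarrow> ('b \<Rightarrow> nat) \<Rightarrow> nat" where
  "poset_rank P rk = Max (rk ` P)"

definition rho :: "'b set \<Rightarrow> ('b \<Rightarrow> nat) \<Rightarrow> 'b \<Rightarrow> 'b \<Rightarrow> 'b \<Rightarrow> nat" where
  "rho P rk x y z = 3 * poset_rank P rk - rk x - rk y - rk z"

definition delta3 :: "'b \<Rightarrow> 'b \<Rightarrow> 'b \<Rightarrow> int" where
  "delta3 x y z = (if x = y \<and> y = z then 1 else 0)"

definition chains3 :: "'b set \<Rightarrow> ('b \<Rightarrow> 'b \<Rightarrow> bool) \<Rightarrow> ('b \<times> 'b \<times> 'b) set" where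
  "chains3 P le = {(x, y, z). x \<in> P \<and> y \<in> P \<and> z \<in> P \<and> le x y \<and> le y z}"

text \<open>J is the unique integer-valued function on triples x \<le> y \<le> z with
  sum over x \<le> a \<le> y \<le> b \<le> z of J(a,y,b) equal to delta3(x,y,z).
  (Values off the chains are normalised to 0 so that THE is well defined.)\<close>

definition is_J :: "'b set \<Rightarrow> ('b \<Rightarrow> 'b \<Rightarrow> bool) \<Rightarrow> ('b \<Rightarrow> 'b \<Rightarrow> 'b \<Rightarrow> int) \<Rightarrow> bool" where
  "is_J P le f \<longleftrightarrow>
     (\<forall>x y z. (x, y, z) \<notin> chains3 P le \<longrightarrow> f x y z = 0) \<and>
     (\<forall>x y z. (x, y, z) \<in> chains3 P le \<longrightarrow>
        (\<Sum>(a, b) \<in> {(a, b). a \<in> P \<and> b \<in> P \<and> le x a \<and> le a y \<and> le y b \<and> le b z}.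
            f a y b) = delta3 x y z)"

definition Jfun :: "'b set \<Rightarrow> ('b \<Rightarrow> 'b \<Rightarrow> bool) \<Rightarrow> 'b \<Rightarrow> 'b \<Rightarrow> 'b \<Rightarrow> int" where
  "Jfun P le = (THE f. is_J P le f)"

definition Mpoly :: "'b set \<Rightarrow> ('b \<Rightarrow> 'b \<Rightarrow> bool) \<Rightarrow> ('b \<Rightarrow> nat) \<Rightarrow> rat poly" where
  "Mpoly P le rk = (\<Sum>(x, y, z) \<in> chains3 P le.
       monom (of_int (Jfun P le x y z)) (rho P rk x y z))"

definition qbinom :: "nat \<Rightarrow> nat \<Rightarrow> nat \<Rightarrow> rat" where
  "qbinom q n k =
     (\<Prod>m = 1..n. of_nat q ^ m - 1) /
     ((\<Prod>m = 1..k. of_nat q ^ m - 1) * (\<Prod>m = 1..n - k. of_nat q ^ m - 1))"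

fun qmultinom :: "nat \<Rightarrow> nat \<Rightarrow> nat list \<Rightarrow> rat" where
  "qmultinom q n [] = 1"
| "qmultinom q n (k # ks) = qbinom q n k * qmultinom q (n - k) ks"

text \<open>F_q^n is represented as functions nat \<Rightarrow> 'a vanishing outside {0..<n}.\<close>

definition vscale :: "'a::field \<Rightarrow> (nat \<Rightarrow> 'a) \<Rightarrow> (nat \<Rightarrow> 'a)" where
  "vscale c v = (\<lambda>i. c * v i)"

definition Fn :: "nat \<Rightarrow> (nat \<Rightarrow> 'a::field) set" where
  "Fn n = {v. \<forall>i\<ge>n. v i = 0}"

definition subspace_lattice :: "nat \<Rightarrow> (nat \<Rightarrow> 'a::field) set set" where
  "subspace_lattice n = {W. W \<subseteq> Fn n \<and> module.subspace vscale W}"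

definition sdim :: "(nat \<Rightarrow> 'a::field) set \<Rightarrow> nat" where
  "sdim W = vector_space.dim vscale W"

end

theory Submission
  imports Defs "HOL-Library.Cardinality"
begin

text \<open>Counting ordered tuples of vectors that are independent modulo a subspace \<open>X\<close> shows that
  an interval \<open>[X, Y]\<close> of \<open>L_q^n\<close> contains exactly \<open>[d, r]_q\<close> subspaces of dimension
  \<open>dim X + r\<close>, where \<open>d = dim Y - dim X\<close>.  Together with the \<open>q\<close>-binomial theorem at \<open>-1\<close>
  this shows that \<open>\<mu>(d) = (-1)^d q^(d choose 2)\<close> satisfies both the upward and the downward
  Moebius recursion on every interval, so \<open>J(x, y, z) = \<mu>(x, y) \<mu>(y, z)\<close> solves the
  recursion defining \<open>J\<close>; that solution is unique by induction on the size of the summation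
  range.  Grouping the chains \<open>x \<le> y \<le> z\<close> by their dimensions \<open>i \<le> j \<le> k\<close>, each group
  has \<open>[n, k]_q [k, j]_q [j, i]_q\<close> elements, which is the \<open>q\<close>-multinomial coefficient.\<close>

section \<open>Gaussian binomial coefficients\<close>

definition qfact :: "nat \<Rightarrow> nat \<Rightarrow> rat" where
  "qfact q m = (\<Prod>k = 1..m. of_nat q ^ k - 1)"

text \<open>\<open>qbinom q m r\<close> is not \<open>0\<close> for \<open>r > m\<close> (truncated subtraction), hence the guard.\<close>

definition gauss_binom :: "nat \<Rightarrow> nat \<Rightarrow> nat \<Rightarrow> rat" where
  "gauss_binom q m r = (if r \<le> m then qbinom q m r else 0)"

lemma qbinom_eq_qfact: "qbinom q m r = qfact q m / (qfact q r * qfact q (m - r))"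
  by (simp add: qbinom_def qfact_def)

lemma qfact_0 [simp]: "qfact q 0 = 1"
  by (simp add: qfact_def)

lemma qfact_Suc: "qfact q (Suc m) = qfact q m * (of_nat q ^ Suc m - 1)"
  by (simp add: qfact_def prod.cl_ivl_Suc)

lemma qpower_ne_1: "1 < q \<Longrightarrow> 0 < k \<Longrightarrow> (of_nat q :: rat) ^ k \<noteq> 1"
  by (metis of_nat_1 of_nat_eq_iff of_nat_power one_less_power less_irrefl)

lemma qfact_nonzero: "1 < q \<Longrightarrow> qfact q m \<noteq> 0"
  by (induction m) (simp_all add: qfact_Suc qpower_ne_1 del: power_Suc)

lemma gauss_binom_0: "1 < q \<Longrightarrow> gauss_binom q m 0 = 1"
  by (simp add: gauss_binom_def qbinom_eq_qfact qfact_nonzero)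

lemma gauss_binom_symmetric: "r \<le> m \<Longrightarrow> gauss_binom q m (m - r) = gauss_binom q m r"
  by (simp add: gauss_binom_def qbinom_eq_qfact mult.commute)

lemma gauss_binom_Suc_Suc:
  assumes "1 < q"
  shows "gauss_binom q (Suc m) (Suc r) = of_nat q ^ Suc r * gauss_binom q m (Suc r) + gauss_binom q m r"
proof -
  consider (less) "m < r" | (eq) "m = r" | (greater) k where "m = Suc (r + k)"
    by (metis less_imp_Suc_add linorder_neqE_nat)
  then show ?thesis
  proof cases
    case greater
    define Q :: rat where "Q = of_nat q"
    define A B where "A = Q ^ Suc r - 1" and "B = Q ^ Suc k - 1"
    have nz: "A \<noteq> 0" "B \<noteq> 0" "qfact q r \<noteq> 0" "qfact q k \<noteq> 0"
      using assms by (simp_all add: A_def B_def Q_def qpower_ne_1 qfact_nonzero del: power_Suc)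
    have split: "Q ^ Suc m - 1 = Q ^ Suc r * B + A"
      by (simp add: greater A_def B_def algebra_simps flip: power_add)
    have qfact_Suc': "qfact q (Suc r) = qfact q r * A" "qfact q (Suc k) = qfact q k * B"
      "qfact q (Suc m) = qfact q m * (Q ^ Suc r * B + A)"
      by (simp_all only: qfact_Suc A_def B_def split flip: Q_def)
    have "gauss_binom q (Suc m) (Suc r) = qfact q (Suc m) / (qfact q (Suc r) * qfact q (Suc k))"
      using greater by (simp add: gauss_binom_def qbinom_eq_qfact)
    also have "\<dots> = Q ^ Suc r * (qfact q m / (qfact q (Suc r) * qfact q k))
        + qfact q m / (qfact q r * qfact q (Suc k))"
      using nz by (simp add: qfact_Suc' field_simps)
    also have "\<dots> = of_nat q ^ Suc r * gauss_binom q m (Suc r) + gauss_binom q m r"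
      using greater by (simp add: gauss_binom_def qbinom_eq_qfact Q_def)
    finally show ?thesis .
  qed (simp_all add: gauss_binom_def qbinom_eq_qfact qfact_Suc qfact_nonzero[OF assms]
         qpower_ne_1[OF assms] del: power_Suc)
qed

lemma gauss_binom_chain_eq_qmultinom:
  assumes "1 < q" "i \<le> j" "j \<le> k" "k \<le> n"
  shows "gauss_binom q n k * gauss_binom q k j * gauss_binom q j i = qmultinom q n [i, j - i, k - j, n - k]"
proof -
  obtain b c d where "j = i + b" "k = i + b + c" "n = i + b + c + d"
    using assms by (metis le_add_diff_inverse)
  moreover have "qfact q m \<noteq> 0" for m
    using qfact_nonzero[OF assms(1)] .
  ultimately show ?thesis
    by (simp add: gauss_binom_def qbinom_eq_qfact field_simps)
qed

text \<open>The number of ordered \<open>r\<close>-tuples of linearly independent vectors in \<open>F_q^m\<close>.\<close>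

definition qfalling :: "nat \<Rightarrow> nat \<Rightarrow> nat \<Rightarrow> nat" where
  "qfalling q m r = (\<Prod>i<r. q ^ m - q ^ i)"

lemma qfalling_mult_qfact:
  assumes "1 < q" "r \<le> m"
  shows "of_nat (qfalling q m r) * qfact q (m - r) = (\<Prod>i<r. of_nat q ^ i) * qfact q m"
  using assms(2)
proof (induction r)
  case 0
  then show ?case
    by (simp add: qfalling_def)
next
  case (Suc r)
  define Q :: rat where "Q = of_nat q"
  have "q ^ r \<le> q ^ m"
    using assms(1) Suc.prems by (simp add: power_increasing)
  then have "of_nat (qfalling q m (Suc r)) = of_nat (qfalling q m r) * (Q ^ r * (Q ^ (m - r) - 1))"
    using Suc.prems by (simp add: qfalling_def Q_def of_nat_diff algebra_simps flip: power_add)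
  moreover have "qfact q (m - r) = qfact q (m - Suc r) * (Q ^ (m - r) - 1)"
    using Suc.prems by (simp add: Q_def Suc_diff_Suc qfact_Suc flip: Suc_diff_Suc)
  ultimately have "of_nat (qfalling q m (Suc r)) * qfact q (m - Suc r)
      = Q ^ r * (of_nat (qfalling q m r) * qfact q (m - r))"
    by (simp only: mult_ac)
  also have "\<dots> = (\<Prod>i<Suc r. Q ^ i) * qfact q m"
    using Suc by (simp add: Q_def)
  finally show ?case
    by (simp add: Q_def)
qed

lemma qfalling_pos: "1 < q \<Longrightarrow> 0 < qfalling q r r"
  unfolding qfalling_def by (rule prod_pos) (simp add: power_strict_increasing)

lemma qfalling_eq_gauss_binom:
  assumes "1 < q"
  shows "of_nat (qfalling q m r) = gauss_binom q m r * of_nat (qfalling q r r)"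
proof (cases "r \<le> m")
  case True
  have "(\<Prod>i<r. (of_nat q :: rat) ^ i) \<noteq> 0"
    using assms by simp
  then show ?thesis
    using qfalling_mult_qfact[OF assms True] qfalling_mult_qfact[OF assms, of r r]
      qfact_nonzero[OF assms] True
    by (simp add: gauss_binom_def qbinom_eq_qfact field_simps)
next
  case False
  then have "qfalling q m r = 0"
    unfolding qfalling_def by (intro prod_zero) auto
  then show ?thesis
    using False by (simp add: gauss_binom_def)
qed

lemma of_nat_eq_gauss_binomI:
  assumes "1 < q" "qfalling q m r = N * qfalling q r r"
  shows "of_nat N = gauss_binom q m r"
proof -
  have "(of_nat N :: rat) * of_nat (qfalling q r r) = gauss_binom q m r * of_nat (qfalling q r r)"
    using qfalling_eq_gauss_binom[OF assms(1), of m r] assms(2) by simp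
  moreover have "(of_nat (qfalling q r r) :: rat) \<noteq> 0"
    using qfalling_pos[OF assms(1), of r] by simp
  ultimately show ?thesis
    by simp
qed

definition mobius_q :: "nat \<Rightarrow> nat \<Rightarrow> int" where
  "mobius_q q d = (-1) ^ d * int q ^ (d choose 2)"

lemma mobius_q_0 [simp]: "mobius_q q 0 = 1"
  by (simp add: mobius_q_def numeral_2_eq_2)

lemma mobius_q_Suc: "mobius_q q (Suc d) = - (int q ^ d * mobius_q q d)"
proof -
  have "Suc d choose 2 = d + (d choose 2)"
    by (simp add: numeral_2_eq_2)
  then show ?thesis
    by (simp add: mobius_q_def power_add)
qed

lemma of_int_mobius_q_mult:
  "(of_int (mobius_q q a) * of_int (mobius_q q b) :: 'a::comm_ring_1)
    = (-1) ^ (a + b) * of_nat q ^ ((a choose 2) + (b choose 2))"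
  by (simp add: mobius_q_def power_add mult_ac)

lemma sum_mobius_q_gauss_binom:
  assumes "1 < q"
  shows "(\<Sum>r\<le>m. of_int (mobius_q q r) * gauss_binom q m r) = (if m = 0 then 1 else 0)"
proof (cases m)
  case 0
  then show ?thesis
    by (simp add: gauss_binom_0[OF assms])
next
  case (Suc m)
  define \<mu> :: "nat \<Rightarrow> rat" where "\<mu> r = of_int (mobius_q q r)" for r
  define Q :: rat where "Q = of_nat q"
  have \<mu>_0: "\<mu> 0 = 1"
    by (simp add: \<mu>_def)
  have "(\<Sum>r\<le>Suc m. \<mu> r * gauss_binom q (Suc m) r)
      = 1 + (\<Sum>r\<le>m. \<mu> (Suc r) * gauss_binom q (Suc m) (Suc r))"
    by (subst sum.atMost_Suc_shift) (simp add: gauss_binom_0[OF assms] \<mu>_0)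
  also have "\<dots> = (1 + (\<Sum>r\<le>m. \<mu> (Suc r) * Q ^ Suc r * gauss_binom q m (Suc r)))
      + (\<Sum>r\<le>m. \<mu> (Suc r) * gauss_binom q m r)"
    by (simp add: gauss_binom_Suc_Suc[OF assms] sum.distrib algebra_simps Q_def)
  also have "1 + (\<Sum>r\<le>m. \<mu> (Suc r) * Q ^ Suc r * gauss_binom q m (Suc r))
      = (\<Sum>r\<le>Suc m. \<mu> r * Q ^ r * gauss_binom q m r)"
    by (subst sum.atMost_Suc_shift) (simp add: gauss_binom_0[OF assms] \<mu>_0)
  also have "\<dots> = (\<Sum>r\<le>m. \<mu> r * Q ^ r * gauss_binom q m r)"
    by (simp add: gauss_binom_def)
  also have "(\<Sum>r\<le>m. \<mu> (Suc r) * gauss_binom q m r) = - (\<Sum>r\<le>m. \<mu> r * Q ^ r * gauss_binom q m r)"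
    by (simp add: \<mu>_def Q_def mobius_q_Suc sum_negf algebra_simps)
  finally show ?thesis
    by (simp add: \<mu>_def Suc)
qed

lemma sum_mobius_q_gauss_binom_rev:
  assumes "1 < q"
  shows "(\<Sum>r\<le>m. of_int (mobius_q q (m - r)) * gauss_binom q m r) = (if m = 0 then 1 else 0)"
proof -
  have "(\<Sum>r\<le>m. of_int (mobius_q q (m - r)) * gauss_binom q m r)
      = (\<Sum>r\<le>m. of_int (mobius_q q (m - (m - r))) * gauss_binom q m (m - r))"
    by (rule sum.reindex_bij_witness[of _ "\<lambda>r. m - r" "\<lambda>r. m - r"]) auto
  also have "\<dots> = (\<Sum>r\<le>m. of_int (mobius_q q r) * gauss_binom q m r)"
    by (rule sum.cong) (simp_all add: gauss_binom_symmetric)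
  finally show ?thesis
    using sum_mobius_q_gauss_binom[OF assms] by simp
qed

section \<open>Vector spaces over a finite field\<close>

lemma one_less_card_field: "1 < CARD('a::{finite,field})"
proof -
  have "card {0::'a, 1} \<le> CARD('a)"
    by (rule card_mono) auto
  then show ?thesis
    by simp
qed

locale finite_field_vector_space = vector_space scale
  for scale :: "'a::{finite,field} \<Rightarrow> 'b::ab_group_add \<Rightarrow> 'b"  (infixr "*s" 75)
begin

lemma span_insert_eq_image: "span (insert v S) = (\<lambda>(c, w). c *s v + w) ` (UNIV \<times> span S)"
proof -
  have "x - c *s v \<in> span S \<longleftrightarrow> (\<exists>w\<in>span S. x = c *s v + w)" for x c
    by (metis add_diff_cancel_left' diff_add_cancel add.commute)
  then show ?thesis
    by (auto simp: span_insert image_iff)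
qed

lemma finite_span: "finite S \<Longrightarrow> finite (span S)"
  by (induction S rule: finite_induct) (simp_all add: span_insert_eq_image)

lemma card_span_insert:
  assumes "finite (span S)" "v \<notin> span S"
  shows "card (span (insert v S)) = CARD('a) * card (span S)"
proof -
  have "inj_on (\<lambda>(c, w). c *s v + w) (UNIV \<times> span S)"
  proof (rule inj_onI, clarsimp)
    fix c c' w w'
    assume w: "w \<in> span S" "w' \<in> span S" and eq: "c *s v + w = c' *s v + w'"
    have "c = c'"
    proof (rule ccontr)
      assume "c \<noteq> c'"
      have "(c - c') *s v = w' - w"
        using eq by (simp add: scale_left_diff_distrib algebra_simps)
      then have "inverse (c - c') *s ((c - c') *s v) \<in> span S"
        using w by (simp add: span_scale span_diff)
      with \<open>c \<noteq> c'\<close> \<open>v \<notin> span S\<close> show False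
        by simp
    qed
    with eq show "c = c' \<and> w = w'"
      by simp
  qed
  then show ?thesis
    by (simp add: span_insert_eq_image card_image card_cartesian_product)
qed

lemma card_span_independent:
  "finite B \<Longrightarrow> independent B \<Longrightarrow> card (span B) = CARD('a) ^ card B"
proof (induction B rule: finite_induct)
  case (insert v B)
  then show ?case
    by (simp add: independent_insert card_span_insert finite_span)
qed simp

lemma card_subspace:
  assumes "subspace W" "finite W"
  shows "card W = CARD('a) ^ dim W"
proof -
  obtain B where B: "B \<subseteq> W" "independent B" "W \<subseteq> span B" "card B = dim W"
    by (rule basis_exists)
  then have "span B = W"
    using span_subspace assms(1) by blast
  then show ?thesis
    using B card_span_independent[of B] finite_subset[OF B(1) assms(2)] by simp
qed

lemma dim_eq_iff_card:
  assumes "subspace W" "finite W"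
  shows "dim W = k \<longleftrightarrow> card W = CARD('a) ^ k"
  using card_subspace[OF assms] one_less_card_field[where 'a='a] by (simp add: power_inject_exp)

lemma dim_le_of_subset:
  assumes "subspace V" "subspace W" "finite W" "V \<subseteq> W"
  shows "dim V \<le> dim W"
proof (rule power_le_imp_le_exp[OF one_less_card_field])
  show "CARD('a) ^ dim V \<le> CARD('a) ^ dim W"
    using card_mono[OF assms(3,4)] card_subspace[OF assms(1) finite_subset[OF assms(4,3)]]
      card_subspace[OF assms(2,3)] by simp
qed

lemma subspace_eq_of_dim_eq:
  assumes "subspace V" "subspace W" "finite W" "V \<subseteq> W" "dim V = dim W"
  shows "V = W"
proof -
  have "card V = card W"
    using assms card_subspace[of V] card_subspace[of W] finite_subset[OF assms(4,3)] by simp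
  then show ?thesis
    using card_subset_eq[OF assms(3,4)] by simp
qed

lemma subspace_zero: "subspace {0}"
  using subspace_span[of "{}"] by simp

lemma dim_zero: "dim {0} = 0"
  using dim_span[of "{}"] dim_eq_card_independent[of "{}"] by (simp add: dependent_def)

fun indep_over :: "'b set \<Rightarrow> 'b list \<Rightarrow> bool" where
  "indep_over X [] = True"
| "indep_over X (v # vs) \<longleftrightarrow> indep_over X vs \<and> v \<notin> span (X \<union> set vs)"

definition indep_over_lists :: "'b set \<Rightarrow> 'b set \<Rightarrow> nat \<Rightarrow> 'b list set" where
  "indep_over_lists X Y r = {vs. length vs = r \<and> set vs \<subseteq> Y \<and> indep_over X vs}"

lemma finite_indep_over_lists: "finite Y \<Longrightarrow> finite (indep_over_lists X Y r)"
  unfolding indep_over_lists_def by (rule finite_subset[OF _ finite_lists_length_eq[of Y r]]) auto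

lemma card_span_indep_over:
  assumes "subspace X" "finite X"
  shows "indep_over X vs \<Longrightarrow> card (span (X \<union> set vs)) = card X * CARD('a) ^ length vs"
proof (induction vs)
  case Nil
  have "span X = X"
    using assms(1) by simp
  then show ?case
    by (simp del: span_eq_iff)
next
  case (Cons v vs)
  then show ?case
    using card_span_insert[of "X \<union> set vs" v] finite_span[of "X \<union> set vs"] assms(2) by simp
qed

lemma dim_span_indep_over:
  assumes "subspace X" "finite X" "indep_over X vs"
  shows "dim (span (X \<union> set vs)) = dim X + length vs"
proof -
  have "card (span (X \<union> set vs)) = CARD('a) ^ (dim X + length vs)"
    using card_span_indep_over[OF assms] card_subspace[OF assms(1,2)] by (simp add: power_add)
  then show ?thesis
    using dim_eq_iff_card[OF subspace_span finite_span] assms(2) by simp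
qed

lemma card_indep_over_lists:
  assumes "subspace X" "subspace Y" "finite Y" "X \<subseteq> Y"
  shows "card (indep_over_lists X Y r) = card X ^ r * qfalling CARD('a) (dim Y - dim X) r"
proof (induction r)
  case 0
  have "indep_over_lists X Y 0 = {[]}"
    by (auto simp: indep_over_lists_def)
  then show ?case
    by (simp add: qfalling_def)
next
  case (Suc r)
  define d where "d = dim Y - dim X"
  have finX: "finite X"
    using assms(3,4) by (rule finite_subset[rotated])
  have "card Y = card X * CARD('a) ^ d"
    using card_subspace[OF assms(1) finX] card_subspace[OF assms(2,3)] dim_le_of_subset[OF assms]
    by (simp add: d_def flip: power_add)
  then have card_Y: "card Y - card X * CARD('a) ^ r = card X * (CARD('a) ^ d - CARD('a) ^ r)"
    by (simp add: diff_mult_distrib2)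
  have span_sub: "span (X \<union> set vs) \<subseteq> Y" if "set vs \<subseteq> Y" for vs
    using that assms(2,4) by (simp add: span_minimal)
  have "indep_over_lists X Y (Suc r)
      = (\<lambda>(vs, v). v # vs) ` (SIGMA vs:indep_over_lists X Y r. Y - span (X \<union> set vs))"
    by (auto simp: indep_over_lists_def length_Suc_conv image_iff)
  moreover have "inj_on (\<lambda>(vs, v). v # vs) (SIGMA vs:indep_over_lists X Y r. Y - span (X \<union> set vs))"
    by (rule inj_onI) auto
  moreover have card_fibre: "card (Y - span (X \<union> set vs)) = card Y - card X * CARD('a) ^ r"
    if "vs \<in> indep_over_lists X Y r" for vs
  proof -
    have "set vs \<subseteq> Y" "indep_over X vs" "length vs = r"
      using that by (simp_all add: indep_over_lists_def)
    then show ?thesis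
      using card_Diff_subset[OF finite_subset[OF span_sub assms(3)] span_sub]
        card_span_indep_over[OF assms(1) finX] by simp
  qed
  ultimately have "card (indep_over_lists X Y (Suc r))
      = (\<Sum>vs\<in>indep_over_lists X Y r. card (Y - span (X \<union> set vs)))"
    by (simp add: card_image card_SigmaI assms(3) finite_indep_over_lists)
  also have "\<dots> = card (indep_over_lists X Y r) * (card Y - card X * CARD('a) ^ r)"
    by (simp add: card_fibre)
  finally show ?case
    using Suc by (simp add: card_Y qfalling_def d_def)
qed

lemma span_indep_over_eq:
  assumes "subspace X" "subspace A" "finite A" "X \<subseteq> A" "set vs \<subseteq> A" "indep_over X vs"
    and "dim A = dim X + length vs"
  shows "span (X \<union> set vs) = A"
proof (rule subspace_eq_of_dim_eq[OF subspace_span assms(2,3)])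
  show "span (X \<union> set vs) \<subseteq> A"
    using assms(2,4,5) by (simp add: span_minimal)
  show "dim (span (X \<union> set vs)) = dim A"
    using dim_span_indep_over[OF assms(1) finite_subset[OF assms(4,3)] assms(6)] assms(7) by simp
qed

lemma indep_over_lists_spanning:
  assumes "subspace X" "subspace A" "finite A" "X \<subseteq> A" "A \<subseteq> Y" "dim A = dim X + r"
  shows "{vs \<in> indep_over_lists X Y r. span (X \<union> set vs) = A} = indep_over_lists X A r"
proof (intro set_eqI iffI)
  fix vs
  assume "vs \<in> {vs \<in> indep_over_lists X Y r. span (X \<union> set vs) = A}"
  then show "vs \<in> indep_over_lists X A r"
    using span_superset[of "X \<union> set vs"] by (auto simp: indep_over_lists_def)
next
  fix vs
  assume "vs \<in> indep_over_lists X A r"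
  then show "vs \<in> {vs \<in> indep_over_lists X Y r. span (X \<union> set vs) = A}"
    using span_indep_over_eq[OF assms(1-4)] assms(5,6) by (auto simp: indep_over_lists_def)
qed

lemma card_intermediate_subspaces:
  assumes "subspace X" "subspace Y" "finite Y" "X \<subseteq> Y"
  shows "of_nat (card {A. subspace A \<and> X \<subseteq> A \<and> A \<subseteq> Y \<and> dim A = dim X + r})
    = gauss_binom CARD('a) (dim Y - dim X) r"
proof -
  define \<A> where "\<A> = {A. subspace A \<and> X \<subseteq> A \<and> A \<subseteq> Y \<and> dim A = dim X + r}"
  have finX: "finite X"
    using assms(3,4) by (rule finite_subset[rotated])
  have fin_\<A>: "finite \<A>"
    by (rule finite_subset[of _ "Pow Y"]) (auto simp: \<A>_def assms(3))
  have span_in_\<A>: "span (X \<union> set vs) \<in> \<A>" if "vs \<in> indep_over_lists X Y r" for vs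
    using that dim_span_indep_over[OF assms(1) finX] span_superset[of "X \<union> set vs"]
      span_minimal[of "X \<union> set vs" Y] assms(2,4)
    by (auto simp: \<A>_def indep_over_lists_def)
  \<comment> \<open>sort the lists by the subspace they span together with \<open>X\<close>\<close>
  have "(\<Sum>A\<in>\<A>. \<Sum>vs\<in>{vs \<in> indep_over_lists X Y r. span (X \<union> set vs) = A}. 1)
      = (\<Sum>vs\<in>indep_over_lists X Y r. 1 :: nat)"
    by (rule sum.group[OF finite_indep_over_lists[OF assms(3)] fin_\<A>]) (use span_in_\<A> in blast)
  then have "card (indep_over_lists X Y r)
      = (\<Sum>A\<in>\<A>. card {vs \<in> indep_over_lists X Y r. span (X \<union> set vs) = A})"
    by simp
  also have "\<dots> = (\<Sum>A\<in>\<A>. card X ^ r * qfalling CARD('a) r r)"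
  proof (rule sum.cong[OF refl])
    fix A
    assume "A \<in> \<A>"
    then have A: "subspace A" "finite A" "X \<subseteq> A" "A \<subseteq> Y" "dim A = dim X + r"
      using finite_subset[OF _ assms(3)] by (auto simp: \<A>_def)
    then show "card {vs \<in> indep_over_lists X Y r. span (X \<union> set vs) = A} = card X ^ r * qfalling CARD('a) r r"
      using card_indep_over_lists[OF assms(1) A(1-3)]
      by (simp add: indep_over_lists_spanning[OF assms(1) A])
  qed
  finally have "card X ^ r * qfalling CARD('a) (dim Y - dim X) r
      = card X ^ r * (card \<A> * qfalling CARD('a) r r)"
    unfolding card_indep_over_lists[OF assms] by (simp only: sum_constant of_nat_id mult_ac)
  moreover have "card X \<noteq> 0"
    using finX subspace_0[OF assms(1)] by auto
  ultimately have "qfalling CARD('a) (dim Y - dim X) r = card \<A> * qfalling CARD('a) r r"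
    by simp
  then show ?thesis
    unfolding \<A>_def by (rule of_nat_eq_gauss_binomI[OF one_less_card_field])
qed

lemma card_subspaces_of_dim:
  assumes "subspace Y" "finite Y"
  shows "of_nat (card {A. subspace A \<and> A \<subseteq> Y \<and> dim A = i}) = gauss_binom CARD('a) (dim Y) i"
proof -
  have "{A. subspace A \<and> A \<subseteq> Y \<and> dim A = i}
      = {A. subspace A \<and> {0} \<subseteq> A \<and> A \<subseteq> Y \<and> dim A = dim {0} + i}"
    by (auto simp: dim_zero subspace_0)
  then show ?thesis
    using card_intermediate_subspaces[OF subspace_zero assms] subspace_0[OF assms(1)]
    by (simp add: dim_zero)
qed

lemma sum_interval_by_dim:
  fixes f :: "nat \<Rightarrow> rat"
  assumes "subspace X" "subspace Y" "finite Y" "X \<subseteq> Y"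
  shows "(\<Sum>A\<in>{A. subspace A \<and> X \<subseteq> A \<and> A \<subseteq> Y}. f (dim A - dim X))
    = (\<Sum>r\<le>dim Y - dim X. gauss_binom CARD('a) (dim Y - dim X) r * f r)"
proof -
  define I where "I = {A. subspace A \<and> X \<subseteq> A \<and> A \<subseteq> Y}"
  have dims: "dim X \<le> dim A" "dim A \<le> dim Y" if "A \<in> I" for A
  proof -
    have A: "subspace A" "X \<subseteq> A" "A \<subseteq> Y"
      using that by (simp_all add: I_def)
    show "dim X \<le> dim A" "dim A \<le> dim Y"
      using dim_le_of_subset[OF assms(1) A(1) finite_subset[OF A(3) assms(3)] A(2)]
        dim_le_of_subset[OF A(1) assms(2,3) A(3)] by simp_all
  qed
  have fin_I: "finite I"
    by (rule finite_subset[of _ "Pow Y"]) (auto simp: I_def assms(3))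
  have layer: "{A \<in> I. dim A - dim X = r}
      = {A. subspace A \<and> X \<subseteq> A \<and> A \<subseteq> Y \<and> dim A = dim X + r}" for r
    using dims(1) by (auto simp: I_def)
  have "(\<Sum>A\<in>I. f (dim A - dim X))
      = (\<Sum>r\<le>dim Y - dim X. \<Sum>A\<in>{A \<in> I. dim A - dim X = r}. f (dim A - dim X))"
    by (rule sum.group[symmetric, OF fin_I]) (auto dest: dims)
  also have "\<dots> = (\<Sum>r\<le>dim Y - dim X. gauss_binom CARD('a) (dim Y - dim X) r * f r)"
  proof (rule sum.cong[OF refl])
    fix r
    have "(\<Sum>A\<in>{A \<in> I. dim A - dim X = r}. f (dim A - dim X)) = (\<Sum>A\<in>{A \<in> I. dim A - dim X = r}. f r)"
      by (rule sum.cong) auto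
    then show "(\<Sum>A\<in>{A \<in> I. dim A - dim X = r}. f (dim A - dim X)) = gauss_binom CARD('a) (dim Y - dim X) r * f r"
      by (simp add: layer card_intermediate_subspaces[OF assms])
  qed
  finally show ?thesis
    by (simp add: I_def)
qed

lemma sum_mobius_q_interval_up:
  assumes "subspace Y" "subspace Z" "finite Z" "Y \<subseteq> Z"
  shows "(\<Sum>B\<in>{B. subspace B \<and> Y \<subseteq> B \<and> B \<subseteq> Z}. mobius_q CARD('a) (dim B - dim Y))
    = (if Y = Z then 1 else 0)"
proof -
  have "(of_int (\<Sum>B\<in>{B. subspace B \<and> Y \<subseteq> B \<and> B \<subseteq> Z}. mobius_q CARD('a) (dim B - dim Y)) :: rat)
      = (\<Sum>r\<le>dim Z - dim Y. of_int (mobius_q CARD('a) r) * gauss_binom CARD('a) (dim Z - dim Y) r)"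
    using sum_interval_by_dim[OF assms, of "\<lambda>r. of_int (mobius_q CARD('a) r)"] by (simp add: mult.commute)
  also have "\<dots> = (if dim Z - dim Y = 0 then 1 else 0)"
    by (rule sum_mobius_q_gauss_binom[OF one_less_card_field])
  also have "\<dots> = of_int (if Y = Z then 1 else 0)"
    using subspace_eq_of_dim_eq[OF assms] dim_le_of_subset[OF assms] by auto
  finally show ?thesis
    by (simp only: of_int_eq_iff)
qed

lemma sum_mobius_q_interval_down:
  assumes "subspace X" "subspace Y" "finite Y" "X \<subseteq> Y"
  shows "(\<Sum>A\<in>{A. subspace A \<and> X \<subseteq> A \<and> A \<subseteq> Y}. mobius_q CARD('a) (dim Y - dim A))
    = (if X = Y then 1 else 0)"
proof -
  have "dim Y - dim A = (dim Y - dim X) - (dim A - dim X)" if "A \<in> {A. subspace A \<and> X \<subseteq> A \<and> A \<subseteq> Y}" for A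
    using that assms dim_le_of_subset[of X A] dim_le_of_subset[of A Y] finite_subset[of A Y] by auto
  then have "(of_int (\<Sum>A\<in>{A. subspace A \<and> X \<subseteq> A \<and> A \<subseteq> Y}. mobius_q CARD('a) (dim Y - dim A)) :: rat)
      = (\<Sum>A\<in>{A. subspace A \<and> X \<subseteq> A \<and> A \<subseteq> Y}.
          of_int (mobius_q CARD('a) ((dim Y - dim X) - (dim A - dim X))))"
    by simp
  also have "\<dots> = (\<Sum>r\<le>dim Y - dim X. of_int (mobius_q CARD('a) (dim Y - dim X - r)) * gauss_binom CARD('a) (dim Y - dim X) r)"
    using sum_interval_by_dim[OF assms, of "\<lambda>r. of_int (mobius_q CARD('a) (dim Y - dim X - r))"]
    by (simp add: mult.commute)
  also have "\<dots> = (if dim Y - dim X = 0 then 1 else 0)"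
    by (rule sum_mobius_q_gauss_binom_rev[OF one_less_card_field])
  also have "\<dots> = of_int (if X = Y then 1 else 0)"
    using subspace_eq_of_dim_eq[OF assms] dim_le_of_subset[OF assms] by auto
  finally show ?thesis
    by (simp only: of_int_eq_iff)
qed

end

section \<open>The function \<open>J\<close> of a finite poset\<close>

lemma is_J_unique:
  fixes P :: "'b::order set"
  assumes "finite P" "is_J P (\<le>) f" "is_J P (\<le>) g"
  shows "f = g"
proof -
  have "f x y z = g x y z" if "(x, y, z) \<in> chains3 P (\<le>)" for x y z
  proof -
    define S where "S a b = {(c, d). c \<in> P \<and> d \<in> P \<and> a \<le> c \<and> c \<le> y \<and> y \<le> d \<and> d \<le> b}" for a b
    have fin_S: "finite (S a b)" for a b
      by (rule finite_subset[of _ "P \<times> P"]) (auto simp: S_def assms(1))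
    show ?thesis
      using that
    proof (induction "card (S x z)" arbitrary: x z rule: less_induct)
      case less
      have sums: "(\<Sum>(a, b)\<in>S x z. f a y b) = delta3 x y z" "(\<Sum>(a, b)\<in>S x z. g a y b) = delta3 x y z"
        using assms(2,3) less.prems unfolding is_J_def S_def by blast+
      have xz: "(x, z) \<in> S x z"
        using less.prems by (auto simp: S_def chains3_def)
      have "f a y b = g a y b" if ab: "(a, b) \<in> S x z - {(x, z)}" for a b
      proof (rule less.hyps)
        have "S a b \<subseteq> S x z" "(x, z) \<notin> S a b"
          using ab by (auto simp: S_def)
        with xz show "card (S a b) < card (S x z)"
          by (intro psubset_card_mono fin_S) blast
        show "(a, y, b) \<in> chains3 P (\<le>)"
          using ab less.prems by (auto simp: S_def chains3_def)
      qed
      then have "(\<Sum>(a, b)\<in>S x z - {(x, z)}. f a y b) = (\<Sum>(a, b)\<in>S x z - {(x, z)}. g a y b)"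
        by (intro sum.cong) auto
      with sums show ?case
        by (simp add: sum.remove[OF fin_S xz])
    qed
  qed
  moreover have "f x y z = g x y z" if "(x, y, z) \<notin> chains3 P (\<le>)" for x y z
    using that assms(2,3) by (simp add: is_J_def)
  ultimately show ?thesis
    by blast
qed

lemma Jfun_eq_mobius_product:
  fixes P :: "'b::order set" and m :: "'b \<Rightarrow> 'b \<Rightarrow> int"
  assumes "finite P"
    and down: "\<And>x y. x \<in> P \<Longrightarrow> y \<in> P \<Longrightarrow> x \<le> y \<Longrightarrow>
      (\<Sum>a\<in>{a \<in> P. x \<le> a \<and> a \<le> y}. m a y) = (if x = y then 1 else 0)"
    and up: "\<And>y z. y \<in> P \<Longrightarrow> z \<in> P \<Longrightarrow> y \<le> z \<Longrightarrow>
      (\<Sum>b\<in>{b \<in> P. y \<le> b \<and> b \<le> z}. m y b) = (if y = z then 1 else 0)"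
  shows "Jfun P (\<le>) = (\<lambda>x y z. if (x, y, z) \<in> chains3 P (\<le>) then m x y * m y z else 0)"
    (is "_ = ?J")
proof -
  have "is_J P (\<le>) ?J"
    unfolding is_J_def
  proof (intro conjI allI impI)
    fix x y z
    assume chain: "(x, y, z) \<in> chains3 P (\<le>)"
    have range: "{(a, b). a \<in> P \<and> b \<in> P \<and> x \<le> a \<and> a \<le> y \<and> y \<le> b \<and> b \<le> z}
        = {a \<in> P. x \<le> a \<and> a \<le> y} \<times> {b \<in> P. y \<le> b \<and> b \<le> z}"
      by auto
    have "(\<Sum>(a, b)\<in>{a \<in> P. x \<le> a \<and> a \<le> y} \<times> {b \<in> P. y \<le> b \<and> b \<le> z}. ?J a y b)
        = (\<Sum>(a, b)\<in>{a \<in> P. x \<le> a \<and> a \<le> y} \<times> {b \<in> P. y \<le> b \<and> b \<le> z}. m a y * m y b)"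
      using chain by (intro sum.cong) (auto simp: chains3_def)
    also have "\<dots> = (\<Sum>a\<in>{a \<in> P. x \<le> a \<and> a \<le> y}. m a y)
        * (\<Sum>b\<in>{b \<in> P. y \<le> b \<and> b \<le> z}. m y b)"
      by (simp add: sum_product sum.cartesian_product)
    also have "\<dots> = delta3 x y z"
      using chain down up by (auto simp: chains3_def delta3_def)
    finally show "(\<Sum>(a, b)\<in>{(a, b). a \<in> P \<and> b \<in> P \<and> x \<le> a \<and> a \<le> y \<and> y \<le> b \<and> b \<le> z}. ?J a y b)
        = delta3 x y z"
      unfolding range .
  qed simp
  moreover from this have "is_J P (\<le>) f \<Longrightarrow> f = ?J" for f
    using is_J_unique[OF assms(1)] by blast
  ultimately show ?thesis
    unfolding Jfun_def by (rule the_equality)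
qed

lemma Mpoly_eq_sum_rank_triples:
  assumes "finite P" "finite T"
    and ranks: "\<And>x y z. (x, y, z) \<in> chains3 P le \<Longrightarrow> (rk x, rk y, rk z) \<in> T"
    and J: "\<And>x y z. (x, y, z) \<in> chains3 P le \<Longrightarrow> Jfun P le x y z = h (rk x) (rk y) (rk z)"
  shows "Mpoly P le rk = (\<Sum>(i, j, k)\<in>T.
      monom (of_nat (card {(x, y, z) \<in> chains3 P le. rk x = i \<and> rk y = j \<and> rk z = k}) * of_int (h i j k))
        (3 * poset_rank P rk - i - j - k))"
proof -
  define rks where "rks = (\<lambda>(x, y, z). (rk x, rk y, rk z))"
  define F where "F = (\<lambda>(i, j, k). monom (of_int (h i j k) :: rat) (3 * poset_rank P rk - i - j - k))"
  have fin: "finite (chains3 P le)"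
    by (rule finite_subset[of _ "P \<times> P \<times> P"]) (auto simp: chains3_def assms(1))
  have "Mpoly P le rk = (\<Sum>c\<in>chains3 P le. F (rks c))"
    unfolding Mpoly_def by (intro sum.cong) (auto simp: F_def rks_def rho_def J)
  also have "\<dots> = (\<Sum>t\<in>T. \<Sum>c\<in>{c \<in> chains3 P le. rks c = t}. F (rks c))"
    by (rule sum.group[symmetric, OF fin assms(2)]) (auto simp: rks_def ranks)
  also have "\<dots> = (\<Sum>t\<in>T. of_nat (card {c \<in> chains3 P le. rks c = t}) * F t)"
    by (intro sum.cong refl) (simp add: sum.cong[of _ _ "\<lambda>c. F (rks c)" "\<lambda>_. F t"])
  also have "\<dots> = (\<Sum>(i, j, k)\<in>T.
      monom (of_nat (card {(x, y, z) \<in> chains3 P le. rk x = i \<and> rk y = j \<and> rk z = k}) * of_int (h i j k))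
        (3 * poset_rank P rk - i - j - k))"
  proof (rule sum.cong[OF refl], clarify)
    fix i j k
    have "{c \<in> chains3 P le. rks c = (i, j, k)} = {(x, y, z) \<in> chains3 P le. rk x = i \<and> rk y = j \<and> rk z = k}"
      by (auto simp: rks_def)
    then show "of_nat (card {c \<in> chains3 P le. rks c = (i, j, k)}) * F (i, j, k)
        = monom (of_nat (card {(x, y, z) \<in> chains3 P le. rk x = i \<and> rk y = j \<and> rk z = k}) * of_int (h i j k))
            (3 * poset_rank P rk - i - j - k)"
      by (simp add: F_def of_nat_mult_conv_smult smult_monom)
  qed
  finally show ?thesis .
qed

section \<open>The subspace lattice\<close>

interpretation VS: finite_field_vector_space "vscale :: 'a::{finite,field} \<Rightarrow> (nat \<Rightarrow> 'a) \<Rightarrow> (nat \<Rightarrow> 'a)"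
  by unfold_locales (auto simp: vscale_def fun_eq_iff algebra_simps)

lemma bij_betw_Fn_lists: "bij_betw (\<lambda>v. map v [0..<n]) (Fn n) {xs. set xs \<subseteq> UNIV \<and> length xs = n}"
proof (rule bij_betwI')
  fix v w :: "nat \<Rightarrow> 'a::field"
  assume "v \<in> Fn n" "w \<in> Fn n"
  then show "(map v [0..<n] = map w [0..<n]) = (v = w)"
    by (auto simp: Fn_def fun_eq_iff map_eq_conv)
next
  fix xs :: "'a list"
  assume "xs \<in> {xs. set xs \<subseteq> UNIV \<and> length xs = n}"
  then show "\<exists>v\<in>Fn n. xs = map v [0..<n]"
    by (intro bexI[of _ "\<lambda>i. if i < n then xs ! i else 0"]) (auto simp: Fn_def intro: nth_equalityI)
qed simp

lemma finite_Fn: "finite (Fn n :: (nat \<Rightarrow> 'a::{finite,field}) set)"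
  using bij_betw_finite[OF bij_betw_Fn_lists[where 'a='a]] finite_lists_length_eq[of "UNIV :: 'a set" n] by simp

lemma card_Fn: "card (Fn n :: (nat \<Rightarrow> 'a::{finite,field}) set) = CARD('a) ^ n"
  using bij_betw_same_card[OF bij_betw_Fn_lists[where 'a='a]] card_lists_length_eq[of "UNIV :: 'a set" n] by simp

lemma subspace_Fn: "VS.subspace (Fn n)"
  unfolding VS.subspace_def Fn_def by (auto simp: vscale_def)

lemma sdim_Fn: "sdim (Fn n :: (nat \<Rightarrow> 'a::{finite,field}) set) = n"
  unfolding sdim_def using VS.dim_eq_iff_card[OF subspace_Fn finite_Fn] card_Fn by blast

lemma finite_subspace_lattice_member:
  "W \<in> (subspace_lattice n :: (nat \<Rightarrow> 'a::{finite,field}) set set) \<Longrightarrow> finite W"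
  unfolding subspace_lattice_def using finite_subset finite_Fn by blast

lemma finite_subspace_lattice: "finite (subspace_lattice n :: (nat \<Rightarrow> 'a::{finite,field}) set set)"
  by (rule finite_subset[of _ "Pow (Fn n)"]) (auto simp: subspace_lattice_def finite_Fn)

lemma interval_subspace_lattice:
  "y \<in> subspace_lattice n \<Longrightarrow>
    {a \<in> subspace_lattice n. x \<subseteq> a \<and> a \<subseteq> y} = {a. VS.subspace a \<and> x \<subseteq> a \<and> a \<subseteq> y}"
  by (auto simp: subspace_lattice_def)

lemma sdim_mono:
  fixes x y :: "(nat \<Rightarrow> 'a::{finite,field}) set"
  assumes "x \<in> subspace_lattice n" "y \<in> subspace_lattice n" "x \<subseteq> y"
  shows "sdim x \<le> sdim y"
  using VS.dim_le_of_subset[of x y] assms finite_subspace_lattice_member[OF assms(2)]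
  by (simp add: subspace_lattice_def sdim_def)

lemma Fn_in_subspace_lattice: "(Fn n :: (nat \<Rightarrow> 'a::{finite,field}) set) \<in> subspace_lattice n"
  by (simp add: subspace_lattice_def subspace_Fn)

lemma sdim_le:
  assumes "x \<in> (subspace_lattice n :: (nat \<Rightarrow> 'a::{finite,field}) set set)"
  shows "sdim x \<le> n"
proof -
  have "x \<subseteq> Fn n"
    using assms by (simp add: subspace_lattice_def)
  then show ?thesis
    using sdim_mono[OF assms Fn_in_subspace_lattice] sdim_Fn[where 'a='a] by simp
qed

lemma poset_rank_subspace_lattice:
  "poset_rank (subspace_lattice n :: (nat \<Rightarrow> 'a::{finite,field}) set set) sdim = n"
  unfolding poset_rank_def
proof (rule Max_eqI)
  show "finite (sdim ` (subspace_lattice n :: (nat \<Rightarrow> 'a) set set))"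
    using finite_subspace_lattice by blast
  show "n \<in> sdim ` (subspace_lattice n :: (nat \<Rightarrow> 'a) set set)"
    using Fn_in_subspace_lattice sdim_Fn[where 'a='a] by (metis image_eqI)
qed (auto simp: sdim_le)

lemma Jfun_subspace_lattice:
  "Jfun (subspace_lattice n :: (nat \<Rightarrow> 'a::{finite,field}) set set) (\<subseteq>)
    = (\<lambda>x y z. if (x, y, z) \<in> chains3 (subspace_lattice n) (\<subseteq>)
        then mobius_q CARD('a) (sdim y - sdim x) * mobius_q CARD('a) (sdim z - sdim y) else 0)"
proof (rule Jfun_eq_mobius_product[OF finite_subspace_lattice])
  fix x y :: "(nat \<Rightarrow> 'a) set"
  assume x: "x \<in> subspace_lattice n" and y: "y \<in> subspace_lattice n" and "x \<subseteq> y"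
  then show "(\<Sum>a\<in>{a \<in> subspace_lattice n. x \<subseteq> a \<and> a \<subseteq> y}. mobius_q CARD('a) (sdim y - sdim a))
      = (if x = y then 1 else 0)"
    unfolding interval_subspace_lattice[OF y] sdim_def
    using VS.sum_mobius_q_interval_down[of x y] finite_subspace_lattice_member[OF y]
    by (simp add: subspace_lattice_def)
next
  fix y z :: "(nat \<Rightarrow> 'a) set"
  assume y: "y \<in> subspace_lattice n" and z: "z \<in> subspace_lattice n" and "y \<subseteq> z"
  then show "(\<Sum>b\<in>{b \<in> subspace_lattice n. y \<subseteq> b \<and> b \<subseteq> z}. mobius_q CARD('a) (sdim b - sdim y))
      = (if y = z then 1 else 0)"
    unfolding interval_subspace_lattice[OF z] sdim_def
    using VS.sum_mobius_q_interval_up[of y z] finite_subspace_lattice_member[OF z]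
    by (simp add: subspace_lattice_def)
qed

lemma card_subspace_lattice_below:
  fixes y :: "(nat \<Rightarrow> 'a::{finite,field}) set"
  assumes "y \<in> subspace_lattice n"
  shows "of_nat (card {x \<in> subspace_lattice n. x \<subseteq> y \<and> sdim x = i}) = gauss_binom CARD('a) (sdim y) i"
proof -
  have "{x \<in> subspace_lattice n. x \<subseteq> y \<and> sdim x = i} = {x. VS.subspace x \<and> x \<subseteq> y \<and> VS.dim x = i}"
    using assms by (auto simp: subspace_lattice_def sdim_def)
  then show ?thesis
    using VS.card_subspaces_of_dim[of y i] assms finite_subspace_lattice_member[OF assms]
    by (simp add: subspace_lattice_def sdim_def)
qed

lemma card_chains_subspace_lattice:
  assumes "i \<le> j" "j \<le> k" "k \<le> n"
  shows "of_nat (card {(x, y, z) \<in> chains3 (subspace_lattice n :: (nat \<Rightarrow> 'a::{finite,field}) set set) (\<subseteq>).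
      sdim x = i \<and> sdim y = j \<and> sdim z = k})
    = gauss_binom CARD('a) n k * gauss_binom CARD('a) k j * gauss_binom CARD('a) j i"
proof -
  define L where "L = (subspace_lattice n :: (nat \<Rightarrow> 'a) set set)"
  define below where "below z r = {x \<in> L. x \<subseteq> z \<and> sdim x = r}" for z r
  have fin_below: "finite (below z r)" for z r
    using finite_subspace_lattice[where 'a='a] by (simp add: below_def L_def)
  have card_below: "of_nat (card (below z r)) = gauss_binom CARD('a) (sdim z) r" if "z \<in> L" for z r
    using card_subspace_lattice_below that by (simp add: below_def L_def)
  have "{(x, y, z) \<in> chains3 L (\<subseteq>). sdim x = i \<and> sdim y = j \<and> sdim z = k}
      = (\<lambda>(z, y, x). (x, y, z)) ` (SIGMA z:below (Fn n) k. SIGMA y:below z j. below y i)"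
    by (auto simp: chains3_def below_def L_def subspace_lattice_def image_iff)
  moreover have "inj_on (\<lambda>(z, y, x). (x, y, z)) (SIGMA z:below (Fn n) k. SIGMA y:below z j. below y i)"
    by (rule inj_onI) auto
  ultimately have "of_nat (card {(x, y, z) \<in> chains3 L (\<subseteq>). sdim x = i \<and> sdim y = j \<and> sdim z = k})
      = (\<Sum>z\<in>below (Fn n) k. \<Sum>y\<in>below z j. (of_nat (card (below y i)) :: rat))"
    by (simp add: card_image card_SigmaI fin_below)
  also have "\<dots> = (\<Sum>z\<in>below (Fn n) k. \<Sum>y\<in>below z j. gauss_binom CARD('a) j i)"
  proof (intro sum.cong refl)
    fix z y
    assume "y \<in> below z j"
    then show "of_nat (card (below y i)) = gauss_binom CARD('a) j i"
      using card_below[of y i] unfolding below_def by simp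
  qed
  also have "\<dots> = (\<Sum>z\<in>below (Fn n) k. gauss_binom CARD('a) k j * gauss_binom CARD('a) j i)"
  proof (intro sum.cong refl)
    fix z
    assume "z \<in> below (Fn n) k"
    then show "(\<Sum>y\<in>below z j. gauss_binom CARD('a) j i) = gauss_binom CARD('a) k j * gauss_binom CARD('a) j i"
      using card_below[of z j] unfolding below_def by simp
  qed
  also have "\<dots> = of_nat (card (below (Fn n) k)) * gauss_binom CARD('a) k j * gauss_binom CARD('a) j i"
    by simp
  also have "\<dots> = gauss_binom CARD('a) n k * gauss_binom CARD('a) k j * gauss_binom CARD('a) j i"
    using card_below[of "Fn n" k] subspace_Fn[where 'a='a] sdim_Fn[where 'a='a]
    by (simp add: L_def subspace_lattice_def)
  finally show ?thesis
    by (simp add: L_def)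
qed

lemma card_chains_mult_mobius_q:
  assumes "i \<le> j" "j \<le> k" "k \<le> n"
  shows "of_nat (card {(x, y, z) \<in> chains3 (subspace_lattice n :: (nat \<Rightarrow> 'a::{finite,field}) set set) (\<subseteq>).
        sdim x = i \<and> sdim y = j \<and> sdim z = k})
      * of_int (mobius_q CARD('a) (j - i) * mobius_q CARD('a) (k - j))
    = (-1) ^ (k - i) * qmultinom CARD('a) n [i, j - i, k - j, n - k]
      * of_nat CARD('a) ^ (((j - i) choose 2) + ((k - j) choose 2))"
proof -
  have card: "of_nat (card {(x, y, z) \<in> chains3 (subspace_lattice n :: (nat \<Rightarrow> 'a) set set) (\<subseteq>).
        sdim x = i \<and> sdim y = j \<and> sdim z = k}) = qmultinom CARD('a) n [i, j - i, k - j, n - k]"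
    using card_chains_subspace_lattice[OF assms, where 'a='a]
      gauss_binom_chain_eq_qmultinom[OF one_less_card_field[where 'a='a] assms] by (rule trans)
  have "j - i + (k - j) = k - i"
    using assms by simp
  then have mobius: "of_int (mobius_q CARD('a) (j - i)) * of_int (mobius_q CARD('a) (k - j))
      = (-1) ^ (k - i) * (of_nat CARD('a) :: rat) ^ (((j - i) choose 2) + ((k - j) choose 2))"
    using of_int_mobius_q_mult[of "CARD('a)" "j - i" "k - j"] by simp
  show ?thesis
    by (simp only: of_int_mult card mobius mult_ac)
qed

theorem proposition6p12:
  fixes n :: nat
  defines "q \<equiv> card (UNIV :: 'a set)"
  shows "Mpoly (subspace_lattice n :: (nat \<Rightarrow> 'a::{finite,field}) set set) (\<subseteq>) sdim =
    (\<Sum>(i, j, k) \<in> {(i, j, k). i \<le> j \<and> j \<le> k \<and> k \<le> n}.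
       monom ((-1) ^ (k - i) * qmultinom q n [i, j - i, k - j, n - k]
              * of_nat q ^ (((j - i) choose 2) + ((k - j) choose 2)))
             (3 * n - i - j - k))"
proof -
  let ?L = "subspace_lattice n :: (nat \<Rightarrow> 'a) set set"
  let ?T = "{(i, j, k). i \<le> j \<and> j \<le> k \<and> k \<le> n}"
  have fin_T: "finite ?T"
    by (rule finite_subset[of _ "{..n} \<times> {..n} \<times> {..n}"]) auto
  have ranks: "(sdim x, sdim y, sdim z) \<in> ?T" if "(x, y, z) \<in> chains3 ?L (\<subseteq>)" for x y z
    using that sdim_mono[of x n y] sdim_mono[of y n z] sdim_le[of z n] by (simp add: chains3_def)
  have "Mpoly ?L (\<subseteq>) sdim = (\<Sum>(i, j, k)\<in>?T.
      monom (of_nat (card {(x, y, z) \<in> chains3 ?L (\<subseteq>). sdim x = i \<and> sdim y = j \<and> sdim z = k})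
        * of_int (mobius_q q (j - i) * mobius_q q (k - j))) (3 * n - i - j - k))"
    using Mpoly_eq_sum_rank_triples[where P = ?L and le = "(\<subseteq>)" and rk = sdim
        and h = "\<lambda>i j k. mobius_q q (j - i) * mobius_q q (k - j)", OF finite_subspace_lattice fin_T ranks]
    by (simp add: Jfun_subspace_lattice poset_rank_subspace_lattice q_def)
  also have "\<dots> = (\<Sum>(i, j, k)\<in>?T.
       monom ((-1) ^ (k - i) * qmultinom q n [i, j - i, k - j, n - k]
              * of_nat q ^ (((j - i) choose 2) + ((k - j) choose 2)))
             (3 * n - i - j - k))"
    unfolding q_def by (intro sum.cong refl) (clarify, simp only: card_chains_mult_mobius_q)
  finally show ?thesis .
qed

end
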